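(* Let $(P,\le,\mu,\gamma)$ be a preordered heap and let $\tau\colon P\times P\to P$ be its target multiplication, $\tau(a,b)=\gamma(\mu(\gamma a,\gamma b))$. Then for every $a\in P$: (i) $(\mu_a,\tau^{\gamma a})$ is an adjoint pair, i.e. for all $b,c\in P$: $\mu(a,b)\le c$ if and only if $b\le \tau(c,\gamma a)$; (ii) $(\mu^a,\tau_{\gamma a})$ is an adjoint pair, i.e. for all $b,c\in P$: $\mu(b,a)\le c$ if and only if $b\le \tau(\gamma a,c)$.
   Context: A preordered heap is a structure $(P,\le,\mu,\gamma)$ where $(P,\le)$ is a preorder (reflexive and transitive relation); $\mu\colon P\times P\to P$ (source multiplication) is monotonic in both arguments; $\gamma\colon P\to P$ (involution) is antitone ($a\le b\Rightarrow \gamma b\le\gamma a$); and the following axioms hold: (A1) $\gamma(\gamma(a))=a$ for all $a$; (A2a, left regularity) $\mu(a,\gamma(\mu(\gamma b,a)))\le b$ for all $a,b\in P$; (A2b, right regularity) $\mu(\gamma(\mu(a,\gamma b)),a)\le b$ for all $a,b\in P$. For a binary operation $\nu$ and $a\in P$, write $\nu_a(b)=\nu(a,b)$ (left multiplication by $a$) and $\nu^a(b)=\nu(b,a)$ (right multiplication by $a$). Monotone maps $L,R\colon P\to P$ form an adjoint pair $(L,R)$ if $Lb\le c \iff b\le Rc$ for all $b,c$. *)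

theory Defs
  imports Main
begin

definition preordered_heap ::
  "('a \<Rightarrow> 'a \<Rightarrow> bool) \<Rightarrow> ('a \<Rightarrow> 'a \<Rightarrow> 'a) \<Rightarrow> ('a \<Rightarrow> 'a) \<Rightarrow> bool" where
  "preordered_heap le mu gam \<longleftrightarrow>
     (\<forall>a. le a a) \<and>
     (\<forall>a b c. le a b \<longrightarrow> le b c \<longrightarrow> le a c) \<and>
     (\<forall>a a' b b'. le a a' \<longrightarrow> le b b' \<longrightarrow> le (mu a b) (mu a' b')) \<and>
     (\<forall>a b. le a b \<longrightarrow> le (gam b) (gam a)) \<and>
     (\<forall>a. gam (gam a) = a) \<and>
     (\<forall>a b. le (mu a (gam (mu (gam b) a))) b) \<and>
     (\<forall>a b. le (mu (gam (mu a (gam b))) a) b)"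

definition target_mult :: "('a \<Rightarrow> 'a \<Rightarrow> 'a) \<Rightarrow> ('a \<Rightarrow> 'a) \<Rightarrow> 'a \<Rightarrow> 'a \<Rightarrow> 'a" where
  "target_mult mu gam a b = gam (mu (gam a) (gam b))"

definition adjoint_pair :: "('a \<Rightarrow> 'a \<Rightarrow> bool) \<Rightarrow> ('a \<Rightarrow> 'a) \<Rightarrow> ('a \<Rightarrow> 'a) \<Rightarrow> bool" where
  "adjoint_pair le L R \<longleftrightarrow>
     (\<forall>b b'. le b b' \<longrightarrow> le (L b) (L b')) \<and> (\<forall>c c'. le c c' \<longrightarrow> le (R c) (R c')) \<and>
     (\<forall>b c. le (L b) c \<longleftrightarrow> le b (R c))"

end

theory Submission
  imports Defs
begin

text \<open>Each adjunction is obtained from its unit and counit. Writing out the target multiplication,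
  the counits are exactly the two regularity axioms, and the units are the regularity axioms at
  \<open>\<gamma> b\<close> turned around by the antitone involution \<open>\<gamma>\<close>.\<close>

lemma adjoint_pairI:
  assumes trans: "transp le"
    and mono_L: "\<And>b b'. le b b' \<Longrightarrow> le (L b) (L b')"
    and mono_R: "\<And>c c'. le c c' \<Longrightarrow> le (R c) (R c')"
    and unit: "\<And>b. le b (R (L b))"
    and counit: "\<And>c. le (L (R c)) c"
  shows "adjoint_pair le L R"
  unfolding adjoint_pair_def
proof (intro conjI allI impI iffI)
  fix b c
  show "le b (R c)" if "le (L b) c"
    using transpD[OF trans unit mono_R[OF that]] .
  show "le (L b) c" if "le b (R c)"
    using transpD[OF trans mono_L[OF that] counit] .
qed (fact mono_L mono_R)+

locale preheap =
  fixes le :: "'a \<Rightarrow> 'a \<Rightarrow> bool" and mu :: "'a \<Rightarrow> 'a \<Rightarrow> 'a" and gam :: "'a \<Rightarrow> 'a"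
  assumes preordered_heap: "preordered_heap le mu gam"
begin

lemma refl: "le a a"
  and trans: "le a b \<Longrightarrow> le b c \<Longrightarrow> le a c"
  and mu_mono: "le a a' \<Longrightarrow> le b b' \<Longrightarrow> le (mu a b) (mu a' b')"
  and gam_antitone: "le a b \<Longrightarrow> le (gam b) (gam a)"
  and gam_gam [simp]: "gam (gam a) = a"
  and left_regular: "le (mu a (gam (mu (gam b) a))) b"
  and right_regular: "le (mu (gam (mu a (gam b))) a) b"
  using preordered_heap unfolding preordered_heap_def by blast+

lemma transp_le: "transp le"
  using trans by (rule transpI)

lemma target_mult_mono: "le a a' \<Longrightarrow> le b b' \<Longrightarrow> le (target_mult mu gam a b) (target_mult mu gam a' b')"
  unfolding target_mult_def by (intro gam_antitone mu_mono)

lemma left_regular_unit: "le b (gam (mu a (gam (mu b a))))"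
  using gam_antitone[OF left_regular[of a "gam b"]] by simp

lemma right_regular_unit: "le b (gam (mu (gam (mu a b)) a))"
  using gam_antitone[OF right_regular[of a "gam b"]] by simp

lemma left_mult_adjoint: "adjoint_pair le (\<lambda>b. mu a b) (\<lambda>c. target_mult mu gam c (gam a))"
proof (rule adjoint_pairI[OF transp_le])
  show "le (mu a b) (mu a b')" if "le b b'" for b b'
    using mu_mono[OF refl that] .
  show "le (target_mult mu gam c (gam a)) (target_mult mu gam c' (gam a))" if "le c c'" for c c'
    using target_mult_mono[OF that refl] .
  show "le b (target_mult mu gam (mu a b) (gam a))" for b
    using right_regular_unit by (simp add: target_mult_def)
  show "le (mu a (target_mult mu gam c (gam a))) c" for c
    using left_regular by (simp add: target_mult_def)
qed

lemma right_mult_adjoint: "adjoint_pair le (\<lambda>b. mu b a) (\<lambda>c. target_mult mu gam (gam a) c)"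
proof (rule adjoint_pairI[OF transp_le])
  show "le (mu b a) (mu b' a)" if "le b b'" for b b'
    using mu_mono[OF that refl] .
  show "le (target_mult mu gam (gam a) c) (target_mult mu gam (gam a) c')" if "le c c'" for c c'
    using target_mult_mono[OF refl that] .
  show "le b (target_mult mu gam (gam a) (mu b a))" for b
    using left_regular_unit by (simp add: target_mult_def)
  show "le (mu (target_mult mu gam (gam a) c) a) c" for c
    using right_regular by (simp add: target_mult_def)
qed

end

theorem theorem1:
  fixes le :: "'a \<Rightarrow> 'a \<Rightarrow> bool" and mu :: "'a \<Rightarrow> 'a \<Rightarrow> 'a" and gam :: "'a \<Rightarrow> 'a"
  assumes "preordered_heap le mu gam"
  shows "\<forall>a. adjoint_pair le (\<lambda>b. mu a b) (\<lambda>c. target_mult mu gam c (gam a))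
            \<and> adjoint_pair le (\<lambda>b. mu b a) (\<lambda>c. target_mult mu gam (gam a) c)"
proof -
  interpret preheap le mu gam
    using assms by unfold_locales
  show ?thesis
    using left_mult_adjoint right_mult_adjoint by blast
qed

end
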